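(* Let $n$ be a positive integer, $q=3^n$, $m=2n$, and let $f(x)=x^d$ with $d=(3^k+1)/2$, where $\gcd(k,2n)=1$, be the Coulter–Matthews planar function on $\mathbb F_{3^m}=\mathbb F_{q^2}$. Let $\mathcal U:=\{(x,y):y+y^q=f(x+x^q)\}\cup\{(\infty)\}$ (the unital of the unitary polarity of $\Pi(f)$ given by $(x,y)\mapsto L_{x^q,y^q}$, $(a)\mapsto N_{a^q}$, $(\infty)\mapsto L_\infty$), and let $\mathcal U_\theta:=\{(x,t\theta):x\in\mathbb F_{q^2},t\in\mathbb F_q\}\cup\{(\infty)\}$ with $\theta\in\mathbb F_{q^2}^*$ such that $\theta^{q+1}$ is a nonsquare in $\mathbb F_q$. Then the subgroups of the shift group $T$ of $\Pi(f)$ fixing $\mathcal U$ and fixing $\mathcal U_\theta$ have orders $3^{2n}$ and $3^{3n}$ respectively. Consequently $\mathcal U$ and $\mathcal U_\theta$ are inequivalent, i.e.\ no collineation of $\Pi(f)$ maps one onto the other.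
   Context: $\Pi(f)$ is the projective plane with points $(x,y)\in\mathbb F_{q^2}^2$ and $(a)$ for $a\in\mathbb F_{q^2}\cup\{\infty\}$, lines $L_{a,b}=\{(x,f(x+a)-b):x\in\mathbb F_{q^2}\}\cup\{(a)\}$, $N_a=\{(a,y):y\in\mathbb F_{q^2}\}\cup\{(\infty)\}$ ($a,b\in\mathbb F_{q^2}$), $L_\infty=\{(a):a\in\mathbb F_{q^2}\cup\{\infty\}\}$. The shift group $T$ consists of the collineations $\tau_{u,v}$ induced by $(x,y)\mapsto(x+u,y+v)$, $u,v\in\mathbb F_{q^2}$. A collineation is a bijection of points mapping lines onto lines. *)

theory Defs
  imports Main
begin

text \<open>Points of Pi(f): affine points (x,y) and points at infinity (a),
  where (Inf (Some a)) is (a) for a in the field and (Inf None) is (infinity).\<close>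
datatype 'a pt = Aff 'a 'a | Inf "'a option"

datatype 'a ln = L 'a 'a | N 'a | Linf

fun line_pts :: "('a::field \<Rightarrow> 'a) \<Rightarrow> 'a ln \<Rightarrow> 'a pt set" where
  "line_pts f (L a b) = {Aff x (f (x + a) - b) | x. True} \<union> {Inf (Some a)}"
| "line_pts f (N a) = {Aff a y | y. True} \<union> {Inf None}"
| "line_pts f Linf = range Inf"

definition collineation :: "('a::field \<Rightarrow> 'a) \<Rightarrow> ('a pt \<Rightarrow> 'a pt) \<Rightarrow> bool" where
  "collineation f g \<longleftrightarrow> bij g \<and> (\<forall>l. \<exists>l'. g ` line_pts f l = line_pts f l')"

text \<open>The shift tau_{u,v}: the collineation induced by (x,y) -> (x+u,y+v);
  it maps L_{a,b} to L_{a-u,b-v}, hence (a) to (a-u), and fixes (infinity).\<close>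
fun shift :: "'a::field \<Rightarrow> 'a \<Rightarrow> 'a pt \<Rightarrow> 'a pt" where
  "shift u v (Aff x y) = Aff (x + u) (y + v)"
| "shift u v (Inf (Some a)) = Inf (Some (a - u))"
| "shift u v (Inf None) = Inf None"

definition shift_group :: "('a::field pt \<Rightarrow> 'a pt) set" where
  "shift_group = {shift u v | u v. True}"

definition cm_fun :: "nat \<Rightarrow> 'a::field \<Rightarrow> 'a" where
  "cm_fun k x = x ^ ((3 ^ k + 1) div 2)"

definition unital_U :: "nat \<Rightarrow> nat \<Rightarrow> 'a::field pt set" where
  "unital_U n k = {Aff x y | x y. y + y ^ (3 ^ n) = cm_fun k (x + x ^ (3 ^ n))} \<union> {Inf None}"

definition unital_Utheta :: "nat \<Rightarrow> 'a::field \<Rightarrow> 'a pt set" where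
  "unital_Utheta n \<theta> = {Aff x (t * \<theta>) | x t. t ^ (3 ^ n) = t} \<union> {Inf None}"

end

theory Submission
  imports Defs "HOL-Number_Theory.Residues" "HOL-Computational_Algebra.Polynomial"
begin

(* A shift tau_{u,v} fixes U iff Tr u = Tr v = 0, where Tr x = x + x^q, and fixes U_theta iff
   v lies in F_q theta. Since F_q and the kernel of Tr both have q elements, the two stabilisers
   have orders q^2 and q^3.

   U is the set of absolute points of the unitary polarity pi, and the unique tangent to U at a
   point Q of U is pi(Q). By the symmetry of pi, the points of contact of the tangents to U
   through any point P lie on the line pi(P); a collineation carries this property over to the
   image of U. It fails for U_theta: f(x) = (x^e)^2 with e = (3^k+1)/4 and x -> x^e bijective,
   so both (theta-1)^2 and (theta+1)^2 = (theta-1)^2 + theta are values of f, and the four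
   tangents to U_theta through (0, (theta-1)^2) touch it in four non-collinear points. *)

section \<open>Finite fields\<close>

lemma power_card_UNIV_eq_self:
  fixes x :: "'a::{field,finite}"
  shows "x ^ card (UNIV :: 'a set) = x"
proof (cases "x = 0")
  case False
  define G :: "'a monoid" where "G = \<lparr>carrier = UNIV - {0}, monoid.mult = (*), one = 1\<rparr>"
  have "group G"
  proof (rule groupI)
    show "\<exists>y\<in>carrier G. y \<otimes>\<^bsub>G\<^esub> z = \<one>\<^bsub>G\<^esub>" if "z \<in> carrier G" for z
      using that by (intro bexI[of _ "inverse z"]) (auto simp: G_def)
  qed (auto simp: G_def)
  moreover have "x \<in> carrier G" using False by (simp add: G_def)
  ultimately have "x [^]\<^bsub>G\<^esub> Coset.order G = \<one>\<^bsub>G\<^esub>" by (rule group.pow_order_eq_1)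
  moreover have "x [^]\<^bsub>G\<^esub> m = x ^ m" for m :: nat
    by (induction m) (simp_all add: G_def)
  moreover have "Coset.order G = card (UNIV :: 'a set) - 1"
    by (simp add: Coset.order_def G_def card_Diff_singleton)
  ultimately have "x ^ (card (UNIV :: 'a set) - 1) = 1" by (simp add: G_def)
  then show ?thesis by (metis finite_UNIV_card_ge_0 finite power_minus_mult mult_1)
qed (simp add: finite_UNIV_card_ge_0)

lemma CHAR_eq_if_card_UNIV_eq_prime_power:
  assumes "card (UNIV :: 'a::{field,finite} set) = p ^ m" "prime p" "m > 0"
  shows "CHAR('a) = p"
proof -
  have "prime CHAR('a)" by (simp add: prime_CHAR_semidom finite_imp_CHAR_pos)
  moreover have "CHAR('a) dvd p ^ m" using CHAR_dvd_CARD[where 'a='a] assms(1) by simp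
  ultimately show ?thesis using assms(2) by (metis prime_dvd_power_nat primes_dvd_imp_eq)
qed

lemma CHAR_power_diff:
  assumes "prime CHAR('a::comm_ring_1)" "m = CHAR('a) ^ j"
  shows "(x - y :: 'a) ^ m = x ^ m - y ^ m"
  using freshmans_dream'[OF assms, of "x - y" y] by simp

lemma card_roots_power_eq_mult_le:
  fixes c :: "'a::idom"
  assumes "m > 1"
  shows "card {x. x ^ m = c * x} \<le> m"
proof -
  define p :: "'a poly" where "p = Polynomial.monom 1 m + [:0, - c:]"
  have "degree p = m"
    using assms unfolding p_def by (subst degree_add_eq_left) (auto simp: degree_monom_eq)
  moreover have "{x. x ^ m = c * x} = {x. poly p x = 0}"
    by (simp add: p_def poly_monom mult.commute)
  ultimately show ?thesis
    using card_poly_roots_bound[of p] assms by force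
qed

lemma card_UNIV_le_card_range_mult_card_kernel:
  fixes h :: "'a::{ab_group_add,finite} \<Rightarrow> 'b::ab_group_add"
  assumes h_diff: "\<And>x y. h (x - y) = h x - h y"
  shows "card (UNIV :: 'a set) \<le> card (range h) * card {x. h x = 0}"
proof -
  have fibre: "card {x. h x = s} \<le> card {x. h x = 0}" if "s \<in> range h" for s
  proof -
    obtain x0 where s: "s = h x0" using \<open>s \<in> range h\<close> by blast
    have "{x. h x = s} \<subseteq> (\<lambda>w. x0 + w) ` {x. h x = 0}"
    proof
      fix x assume "x \<in> {x. h x = s}"
      then have "x - x0 \<in> {x. h x = 0}" using s h_diff by simp
      then show "x \<in> (\<lambda>w. x0 + w) ` {x. h x = 0}" by (rule rev_image_eqI) simp
    qed
    then have "card {x. h x = s} \<le> card ((\<lambda>w. x0 + w) ` {x. h x = 0})"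
      by (simp add: card_mono)
    also have "\<dots> \<le> card {x. h x = 0}" by (rule card_image_le) simp
    finally show ?thesis .
  qed
  have "UNIV = (\<Union>s\<in>range h. {x. h x = s})" by blast
  then have "card (UNIV :: 'a set) \<le> (\<Sum>s\<in>range h. card {x. h x = s})"
    using card_UN_le[of "range h" "\<lambda>s. {x. h x = s}"] by simp
  also have "\<dots> \<le> (\<Sum>s\<in>range h. card {x. h x = 0})"
    by (rule sum_mono) (rule fibre)
  finally show ?thesis by simp
qed

section \<open>The Coulter--Matthews exponent\<close>

lemma power_power_mult_eq_self:
  fixes x :: "'a::monoid_mult"
  assumes "x ^ (p ^ a) = x"
  shows "x ^ (p ^ (a * u)) = x"
proof (induction u)
  case (Suc u)
  have "p ^ (a * Suc u) = p ^ a * p ^ (a * u)" by (simp add: power_add)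
  then have "x ^ (p ^ (a * Suc u)) = (x ^ (p ^ a)) ^ (p ^ (a * u))"
    by (simp add: power_mult)
  then show ?case using Suc assms by simp
qed simp

lemma power_power_gcd_eq_self:
  fixes x :: "'a::monoid_mult"
  assumes "x ^ (p ^ a) = x" "x ^ (p ^ b) = x" "a \<noteq> 0"
  shows "x ^ (p ^ gcd a b) = x"
proof -
  obtain u v where uv: "a * u = b * v + gcd a b"
    using bezout_nat[OF assms(3)] by blast
  have "x = x ^ (p ^ (a * u))" using power_power_mult_eq_self[OF assms(1)] by simp
  also have "\<dots> = (x ^ (p ^ (b * v))) ^ (p ^ gcd a b)"
    by (simp add: uv power_add power_mult)
  also have "\<dots> = x ^ (p ^ gcd a b)" using power_power_mult_eq_self[OF assms(2)] by simp
  finally show ?thesis by simp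
qed

lemma three_power_odd_plus_one:
  assumes "odd k"
  shows "(3::nat) ^ k + 1 = 4 * ((3 ^ k + 1) div 4)" "odd (((3::nat) ^ k + 1) div 4)"
proof -
  obtain j where k: "k = 2 * j + 1" using assms oddE by blast
  have "(9::nat) ^ j mod 8 = 1" using power_mod[of "9::nat" 8 j] by simp
  then obtain i where "(9::nat) ^ j = 8 * i + 1" by (metis div_mult_mod_eq mult.commute)
  then have "(3::nat) ^ k + 1 = 4 * (6 * i + 1)" by (simp add: k power_add power_mult)
  then show "(3::nat) ^ k + 1 = 4 * ((3 ^ k + 1) div 4)" "odd (((3::nat) ^ k + 1) div 4)"
    by simp_all
qed

lemma cm_exponent_root_of_unity:
  fixes x :: "'a::field"
  assumes x_frob: "x ^ (3 ^ (2 * n)) = x" and "odd k" "coprime k n"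
    and x_e: "x ^ ((3 ^ k + 1) div 4) = 1"
  shows "x = 1"
proof -
  define e where "e = ((3::nat) ^ k + 1) div 4"
  have e4: "(3::nat) ^ k + 1 = 4 * e" and "odd e"
    using three_power_odd_plus_one[OF \<open>odd k\<close>] by (simp_all add: e_def)
  \<comment> \<open>\<open>x ^ 3 ^ k\<close> is the inverse of \<open>x\<close>, so \<open>x\<close> is fixed by \<open>y \<mapsto> y ^ 3 ^ (2 * k)\<close> and by
    \<open>y \<mapsto> y ^ 3 ^ (2 * n)\<close>, hence by \<open>y \<mapsto> y ^ 9\<close>; as \<open>k\<close> is odd this forces \<open>x ^ 4 = 1\<close>.\<close>
  have "x ^ (3 ^ k) * x = (x ^ e) ^ 4"
    by (metis e4 power_Suc2 Suc_eq_plus1 power_mult mult.commute)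
  then have "x ^ (3 ^ k) * x = 1" using x_e by (simp add: e_def)
  then have x_inv: "x ^ (3 ^ k) = inverse x"
    by (metis inverse_unique mult.commute)
  have "x ^ (3 ^ (2 * k)) = (x ^ (3 ^ k)) ^ (3 ^ k)"
    by (simp add: mult_2 power_add power_mult)
  also have "\<dots> = x" by (simp add: x_inv power_inverse)
  finally have "x ^ (3 ^ (2 * k)) = x" .
  moreover have "gcd (2 * k) (2 * n) = 2"
    using \<open>coprime k n\<close> by (simp add: gcd_mult_distrib_nat[symmetric])
  moreover have "2 * k \<noteq> 0" using \<open>odd k\<close> by (auto simp: odd_pos)
  ultimately have x9: "x ^ (3 ^ 2) = x" using power_power_gcd_eq_self x_frob by metis
  obtain j where k: "k = 2 * j + 1" using \<open>odd k\<close> oddE by blast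
  have "x ^ (3 ^ k) = (x ^ (3 ^ (2 * j))) ^ 3"
    by (simp add: k power_add power_mult[symmetric] mult.commute[of _ 3])
  then have "x ^ (3 ^ k) = x ^ 3" using power_power_mult_eq_self[OF x9, of j] by simp
  then have x4: "x ^ 4 = 1" using \<open>x ^ (3 ^ k) * x = 1\<close> by (simp add: power_Suc2[symmetric])
  have "x ^ e = (x ^ 4) ^ (e div 4) * x ^ (e mod 4)"
    by (simp only: power_mult[symmetric] power_add[symmetric] mult_div_mod_eq)
  then have "x ^ (e mod 4) = 1" using x_e x4 by (simp add: e_def)
  moreover have "e mod 4 = 1 \<or> e mod 4 = 3" using \<open>odd e\<close> by presburger
  moreover have "x ^ 4 = x ^ 3 * x" by (simp only: power_Suc2[symmetric] numeral_eq_Suc) simp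
  ultimately show ?thesis using x4 by fastforce
qed

lemma cm_exponent_power_inj:
  fixes x y :: "'a::field"
  assumes "x ^ (3 ^ (2 * n)) = x" "y ^ (3 ^ (2 * n)) = y" "odd k" "coprime k n"
    and "x ^ ((3 ^ k + 1) div 4) = y ^ ((3 ^ k + 1) div 4)"
  shows "x = y"
proof (cases "y = 0")
  case True
  have "((3::nat) ^ k + 1) div 4 \<noteq> 0"
    using three_power_odd_plus_one(2)[OF \<open>odd k\<close>] by (metis even_zero)
  then show ?thesis using assms(5) True by (simp add: zero_power)
next
  case False
  have "(x / y) ^ (3 ^ (2 * n)) = x / y" using assms(1,2) by (simp add: power_divide)
  moreover have "(x / y) ^ ((3 ^ k + 1) div 4) = 1" using assms(5) False by (simp add: power_divide)
  ultimately have "x / y = 1" using cm_exponent_root_of_unity assms(3,4) by blast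
  then show ?thesis using False by simp
qed

lemma cm_fun_eq_square:
  assumes "odd k"
  shows "cm_fun k x = (x ^ ((3 ^ k + 1) div 4)) ^ 2"
proof -
  have "((3::nat) ^ k + 1) div 2 = ((3 ^ k + 1) div 4) * 2"
    using three_power_odd_plus_one(1)[OF assms] by linarith
  then show ?thesis by (simp add: cm_fun_def power_mult)
qed

section \<open>Shifts\<close>

lemma shift_shift_minus [simp]: "shift u v (shift (- u) (- v) p) = (p :: 'a::field pt)"
  by (induction "- u" "- v" p rule: shift.induct) simp_all

lemma shift_image_eqI:
  assumes "\<And>p. p \<in> A \<Longrightarrow> shift u v p \<in> A" "\<And>p. p \<in> A \<Longrightarrow> shift (- u) (- v) p \<in> A"
  shows "shift u v ` A = (A :: 'a::field pt set)"
proof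
  show "shift u v ` A \<subseteq> A" using assms(1) by blast
  show "A \<subseteq> shift u v ` A"
  proof
    fix p assume "p \<in> A"
    then show "p \<in> shift u v ` A"
      using assms(2) image_eqI[of p "shift u v" "shift (- u) (- v) p"] by simp
  qed
qed

lemma inj_shift: "inj (\<lambda>(u, v). shift u v :: 'a::field pt \<Rightarrow> 'a pt)"
proof (rule injI, clarify)
  fix u v u' v' :: 'a
  assume "shift u v = shift u' v'"
  then have "shift u v (Aff 0 0) = shift u' v' (Aff 0 0)" by simp
  then show "u = u' \<and> v = v'" by simp
qed

lemma card_shift_group_filter:
  "card {g \<in> shift_group. P g} = card {(u, v). P (shift u v :: 'a::field pt \<Rightarrow> 'a pt)}"
proof -
  have "{g \<in> shift_group. P g} = (\<lambda>(u, v). shift u v) ` {(u, v). P (shift u v :: 'a pt \<Rightarrow> 'a pt)}"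
    by (auto simp: shift_group_def)
  then show ?thesis using card_image[OF inj_on_subset[OF inj_shift]] by simp
qed

section \<open>Lines, tangents and collineations\<close>

lemma line_pts_inject:
  fixes f :: "'a::field \<Rightarrow> 'a"
  assumes "line_pts f l = line_pts f l'"
  shows "l = l'"
proof (cases l)
  case (L a b)
  then have "Inf (Some a) \<in> line_pts f l'" "Aff 0 (f a - b) \<in> line_pts f l'"
    using assms by auto
  then show ?thesis using L by (cases l') auto
next
  case (N a)
  then have "Inf None \<in> line_pts f l'" "Aff a 0 \<in> line_pts f l'" using assms by auto
  then show ?thesis using N by (cases l') auto
next
  case Linf
  then have "Inf None \<in> line_pts f l'" "Inf (Some 0) \<in> line_pts f l'" using assms by auto
  then show ?thesis using Linf by (cases l') auto
qed

lemma finite_UNIV_ln: "finite (UNIV :: 'a::finite ln set)"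
proof -
  have "(UNIV :: 'a ln set) \<subseteq> case_prod L ` UNIV \<union> range N \<union> {Linf}"
  proof
    fix l :: "'a ln"
    show "l \<in> case_prod L ` UNIV \<union> range N \<union> {Linf}" by (cases l) auto
  qed
  then show ?thesis by (rule finite_subset) simp
qed

lemma collineation_line_surj:
  fixes f :: "'a::{field,finite} \<Rightarrow> 'a"
  assumes "collineation f g"
  shows "\<exists>l. g ` line_pts f l = line_pts f l'"
proof -
  obtain G where G: "\<And>l. g ` line_pts f l = line_pts f (G l)"
    using assms unfolding collineation_def by metis
  have "inj G"
  proof (rule injI)
    fix l1 l2 assume "G l1 = G l2"
    then have "g ` line_pts f l1 = g ` line_pts f l2" by (simp add: G)
    then show "l1 = l2"
      using assms by (auto simp: collineation_def bij_def inj_image_eq_iff intro: line_pts_inject)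
  qed
  then have "surj G" using finite_UNIV_inj_surj[OF finite_UNIV_ln] by blast
  then show ?thesis using G by (metis surjD)
qed

definition tangent_at :: "('a::field \<Rightarrow> 'a) \<Rightarrow> 'a pt set \<Rightarrow> 'a ln \<Rightarrow> 'a pt \<Rightarrow> bool" where
  "tangent_at f A l Q \<longleftrightarrow> line_pts f l \<inter> A = {Q}"

lemma collineation_tangent_at_preimage:
  fixes f :: "'a::{field,finite} \<Rightarrow> 'a"
  assumes "collineation f g" "g ` A = B" "tangent_at f B l' Q"
  obtains l where "g ` line_pts f l = line_pts f l'" "tangent_at f A l (inv_into UNIV g Q)"
proof -
  obtain l where l: "g ` line_pts f l = line_pts f l'"
    using collineation_line_surj[OF assms(1)] by blast
  have "inj g" using assms(1) by (simp add: collineation_def bij_def)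
  then have "g ` (line_pts f l \<inter> A) = {Q}"
    using l assms(2,3) by (simp add: image_Int tangent_at_def)
  then have "line_pts f l \<inter> A = inv_into UNIV g ` {Q}" using \<open>inj g\<close> by (metis image_inv_f_f)
  then show ?thesis using that l by (simp add: tangent_at_def)
qed

section \<open>The field of order \<open>q\<^sup>2\<close>\<close>

locale cm_field =
  fixes n k :: nat and f :: "'a::{field,finite} \<Rightarrow> 'a"
  assumes card_UNIV: "card (UNIV :: 'a set) = 3 ^ (2 * n)"
    and n_pos: "n > 0"
    and k_coprime: "gcd k (2 * n) = 1"
    and f_def: "f = cm_fun k"
begin

abbreviation q :: nat where "q \<equiv> 3 ^ n"

definition Tr :: "'a \<Rightarrow> 'a" where "Tr x = x + x ^ q"

lemma CHAR_eq_3: "CHAR('a) = 3"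
proof -
  have "prime (3::nat)"
  proof -
    have "{2..<3::nat} = {2}" by auto
    then show ?thesis by (simp add: prime_nat_iff')
  qed
  then show ?thesis using CHAR_eq_if_card_UNIV_eq_prime_power[where 'a='a] card_UNIV n_pos by simp
qed

lemma three_eq_0 [simp]: "(3::'a) = 0"
  using of_nat_CHAR[where 'a='a] by (simp add: CHAR_eq_3)

lemma two_neq_0 [simp]: "(2::'a) \<noteq> 0"
proof
  assume "(2::'a) = 0"
  then have "(3::'a) = 1" by (metis add_0 numeral_Bit1 numeral_One one_add_one)
  then show False by simp
qed

lemma four_eq_1: "(4::'a) = 1"
proof -
  have "(4::'a) = 3 + 1" by (simp del: three_eq_0)
  then show ?thesis by simp
qed

lemma power_q_add: "(x + y :: 'a) ^ q = x ^ q + y ^ q"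
  using freshmans_dream'[where 'a='a, of q n] CHAR_eq_3 by (simp add: prime_CHAR_semidom finite_imp_CHAR_pos)

lemma power_q_diff: "(x - y :: 'a) ^ q = x ^ q - y ^ q"
  using CHAR_power_diff[where 'a='a, of q n] CHAR_eq_3 by (simp add: prime_CHAR_semidom finite_imp_CHAR_pos)

lemma power_q_minus: "(- x :: 'a) ^ q = - (x ^ q)"
  by simp

lemma power_2n_eq_self: "(x::'a) ^ (3 ^ (2 * n)) = x"
  using power_card_UNIV_eq_self[of x] card_UNIV by simp

lemma power_q_power_q [simp]: "((x::'a) ^ q) ^ q = x"
  using power_2n_eq_self by (simp add: mult_2 power_add flip: power_mult)

lemma Tr_add: "Tr (x + y) = Tr x + Tr y"
  by (simp add: Tr_def power_q_add)

lemma Tr_diff: "Tr (x - y) = Tr x - Tr y"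
  by (simp add: Tr_def power_q_diff)

lemma Tr_minus: "Tr (- x) = - Tr x"
  by (simp add: Tr_def power_q_minus)

lemma Tr_0 [simp]: "Tr 0 = 0"
  by (simp add: Tr_def)

lemma Tr_power_q [simp]: "Tr x ^ q = Tr x"
  by (simp add: Tr_def power_q_add add.commute)

lemma Tr_power_q_arg [simp]: "Tr (x ^ q) = Tr x"
  by (simp add: Tr_def add.commute)

lemma Tr_fixed: "(c::'a) ^ q = c \<Longrightarrow> Tr c = - c"
  using three_eq_0 by (simp add: Tr_def eq_neg_iff_add_eq_0 flip: mult_2)

lemma q_gt_1: "q > 1"
  using one_less_power[of "3::nat" n] n_pos by simp

lemma card_fixed_power_q: "card {x::'a. x ^ q = x} = q"
  and card_Tr_kernel: "card {x. Tr x = 0} = q"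
proof -
  have le: "card {x::'a. x ^ q = x} \<le> q" "card {x. Tr x = 0} \<le> q"
    using q_gt_1 card_roots_power_eq_mult_le[of q 1] card_roots_power_eq_mult_le[of q "-1"]
    by (simp_all add: Tr_def eq_neg_iff_add_eq_0 add.commute)
  have "q * q \<le> card (range Tr) * card {x. Tr x = 0}"
    using card_UNIV_le_card_range_mult_card_kernel[of Tr] card_UNIV
    by (simp add: Tr_diff mult_2 power_add)
  also have "card (range Tr) \<le> card {x::'a. x ^ q = x}"
    by (rule card_mono) auto
  finally have prod: "q * q \<le> card {x::'a. x ^ q = x} * card {x. Tr x = 0}" by simp
  also have "\<dots> \<le> card {x::'a. x ^ q = x} * q" using le by simp
  finally show "card {x::'a. x ^ q = x} = q" using le q_gt_1 by simp
  with prod le show "card {x. Tr x = 0} = q" by simp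
qed

lemma Tr_kernel_nontrivial: "\<exists>w. w \<noteq> 0 \<and> Tr w = 0"
proof (rule ccontr)
  assume "\<nexists>w. w \<noteq> 0 \<and> Tr w = 0"
  then have "{x. Tr x = 0} \<subseteq> {0}" by auto
  then have "card {x. Tr x = 0} \<le> card {0::'a}" by (intro card_mono) simp_all
  then show False using q_gt_1 by (simp add: card_Tr_kernel)
qed

lemma k_odd: "odd k"
proof
  assume "even k"
  then have "2 dvd gcd k (2 * n)" by simp
  then show False using k_coprime by simp
qed

lemma coprime_k_n: "coprime k n"
  using k_coprime by (metis coprime_iff_gcd_eq_1 coprime_mult_right_iff)

abbreviation e :: nat where "e \<equiv> (3 ^ k + 1) div 4"

lemma f_eq_square: "f x = (x ^ e) ^ 2"
  using cm_fun_eq_square[OF k_odd] by (simp add: f_def)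

lemma power_e_inj: "(x::'a) ^ e = y ^ e \<Longrightarrow> x = y"
  using cm_exponent_power_inj power_2n_eq_self k_odd coprime_k_n by blast

lemma power_e_surj: "\<exists>x::'a. x ^ e = y"
proof -
  have "inj (\<lambda>x::'a. x ^ e)" using power_e_inj by (rule injI)
  then have "surj (\<lambda>x::'a. x ^ e)" by (simp add: finite_UNIV_inj_surj)
  then show ?thesis by (metis surjD)
qed

lemma f_eq_0_iff [simp]: "f x = 0 \<longleftrightarrow> x = 0"
  using three_power_odd_plus_one(2)[OF k_odd] by (auto simp: f_eq_square elim: oddE)

lemma f_0 [simp]: "f 0 = 0"
  by simp

lemma f_minus [simp]: "f (- x) = f x"
  using three_power_odd_plus_one(2)[OF k_odd] by (simp add: f_eq_square power_minus_odd)

lemma f_power_q: "f (x ^ q) = f x ^ q"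
  by (simp only: f_def cm_fun_def power_mult[symmetric] mult.commute)

lemma f_eq_f_imp: "f x = f y \<Longrightarrow> x = y \<or> x = - y"
proof -
  assume "f x = f y"
  then have "x ^ e = y ^ e \<or> x ^ e = - (y ^ e)" by (simp add: f_eq_square power2_eq_iff)
  moreover have "- (y ^ e) = (- y) ^ e"
    using three_power_odd_plus_one(2)[OF k_odd] by (simp add: power_minus_odd)
  ultimately show ?thesis using power_e_inj by metis
qed

lemma f_surj_squares: "\<exists>x. f x = s ^ 2"
  using power_e_surj f_eq_square by metis

abbreviation U :: "'a pt set" where "U \<equiv> unital_U n k"

lemma Aff_in_U: "Aff x y \<in> U \<longleftrightarrow> Tr y = f (Tr x)"
  by (auto simp: unital_U_def Tr_def f_def)

lemma Inf_in_U: "Inf c \<in> U \<longleftrightarrow> c = None"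
  by (auto simp: unital_U_def)

lemma shift_image_U_iff: "shift u v ` U = U \<longleftrightarrow> Tr u = 0 \<and> Tr v = 0"
proof
  assume stable: "shift u v ` U = U"
  have "Aff 0 0 \<in> U" by (simp add: Aff_in_U)
  then have "shift u v (Aff 0 0) \<in> U" using stable by blast
  then have "Aff u v \<in> U" by simp
  then have v: "Tr v = f (Tr u)" by (simp add: Aff_in_U)
  then have "Aff (- u) v \<in> U" by (simp add: Aff_in_U Tr_minus)
  then have "shift u v (Aff (- u) v) \<in> U" using stable by blast
  then have "Aff 0 (v + v) \<in> U" by simp
  then have "Tr v + Tr v = 0" by (simp only: Aff_in_U Tr_add Tr_0 f_0)
  then have "Tr v = 0" by (metis mult_2 two_neq_0 mult_eq_0_iff)
  then show "Tr u = 0 \<and> Tr v = 0" using v by simp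
next
  assume "Tr u = 0 \<and> Tr v = 0"
  then have "shift a b p \<in> U" if "Tr a = 0" "Tr b = 0" "p \<in> U" for a b p
    using that by (induction a b p rule: shift.induct) (simp_all add: Aff_in_U Inf_in_U Tr_add)
  with \<open>Tr u = 0 \<and> Tr v = 0\<close> show "shift u v ` U = U"
    by (intro shift_image_eqI) (simp_all add: Tr_minus)
qed

lemma card_shift_stabilizer_U: "card {g \<in> shift_group. g ` U = U} = 3 ^ (2 * n)"
proof -
  have "{(u, v). shift u v ` U = U} = {x. Tr x = 0} \<times> {x. Tr x = 0}"
    by (auto simp: shift_image_U_iff)
  then show ?thesis
    by (simp add: card_shift_group_filter card_cartesian_product card_Tr_kernel mult_2 power_add)
qed

lemma Aff_in_Utheta: "Aff x y \<in> unital_Utheta n \<theta> \<longleftrightarrow> (\<exists>t. t ^ q = t \<and> y = t * \<theta>)"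
  by (auto simp: unital_Utheta_def)

lemma shift_image_Utheta_iff:
  fixes \<theta> :: "'a::{field,finite}"
  shows "shift u v ` unital_Utheta n \<theta> = unital_Utheta n \<theta> \<longleftrightarrow> (\<exists>t. t ^ q = t \<and> v = t * \<theta>)"
proof
  assume "shift u v ` unital_Utheta n \<theta> = unital_Utheta n \<theta>"
  moreover have "Aff 0 0 \<in> unital_Utheta n \<theta>"
    by (auto simp: unital_Utheta_def intro!: exI[of _ 0])
  ultimately have "shift u v (Aff 0 0) \<in> unital_Utheta n \<theta>" by blast
  then show "\<exists>t. t ^ q = t \<and> v = t * \<theta>" by (auto simp: unital_Utheta_def)
next
  assume "\<exists>t. t ^ q = t \<and> v = t * \<theta>"
  then obtain t where t: "t ^ q = t" "v = t * \<theta>" by blast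
  have closed: "shift a (s * \<theta>) p \<in> unital_Utheta n \<theta>"
    if s: "s ^ q = s" and p: "p \<in> unital_Utheta n \<theta>" for a s p
  proof (cases p)
    case (Aff x y)
    then obtain r where "r ^ q = r" "y = r * \<theta>" using p by (auto simp: unital_Utheta_def)
    then show ?thesis using Aff s
      by (auto simp: unital_Utheta_def power_q_add distrib_right intro!: exI[of _ "r + s"])
  next
    case (Inf c)
    then show ?thesis using p by (auto simp: unital_Utheta_def)
  qed
  show "shift u v ` unital_Utheta n \<theta> = unital_Utheta n \<theta>"
    using closed[of t] closed[of "- t"] t by (intro shift_image_eqI) (simp_all add: power_q_minus)
qed

lemma card_shift_stabilizer_Utheta:
  fixes \<theta> :: "'a::{field,finite}"
  assumes "\<theta> \<noteq> 0"
  shows "card {g \<in> shift_group. g ` unital_Utheta n \<theta> = unital_Utheta n \<theta>} = 3 ^ (3 * n)"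
proof -
  have "{(u, v). shift u v ` unital_Utheta n \<theta> = unital_Utheta n \<theta>}
      = UNIV \<times> (\<lambda>t. t * \<theta>) ` {t. t ^ q = t}"
    by (auto simp: shift_image_Utheta_iff)
  moreover have "card ((\<lambda>t. t * \<theta>) ` {t. t ^ q = t}) = q"
    using assms by (subst card_image) (auto intro: inj_onI simp: card_fixed_power_q)
  ultimately show ?thesis
    by (simp add: card_shift_group_filter card_cartesian_product card_UNIV flip: power_add)
qed

section \<open>The unitary polarity\<close>

fun polar :: "'a pt \<Rightarrow> 'a ln" where
  "polar (Aff x y) = L (x ^ q) (y ^ q)"
| "polar (Inf None) = Linf"
| "polar (Inf (Some a)) = N (a ^ q)"

lemma polar_symmetric: "P \<in> line_pts f (polar Q) \<Longrightarrow> Q \<in> line_pts f (polar P)"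
proof (induction Q rule: polar.induct)
  case (1 a b)
  then show ?case
  proof (cases P rule: polar.cases)
    case (1 x y)
    with "1.prems" have "y = f (x + a ^ q) - b ^ q" by simp
    then have "y ^ q = f (a + x ^ q) - b"
      by (simp add: power_q_diff power_q_add add.commute flip: f_power_q)
    with 1 show ?thesis by simp
  qed (use "1.prems" in auto)
qed (cases P rule: polar.cases; auto)+

lemma vertical_line_meets_U_twice: "\<exists>y y'. y \<noteq> y' \<and> Aff a y \<in> U \<and> Aff a y' \<in> U"
proof -
  obtain w where w: "w \<noteq> 0" "Tr w = 0" using Tr_kernel_nontrivial by blast
  define y where "y = - f (Tr a)"
  have "Tr y = f (Tr a)"
    by (simp add: y_def Tr_minus Tr_fixed flip: f_power_q)
  then show ?thesis using w by (intro exI[of _ y] exI[of _ "y + w"]) (simp add: Aff_in_U Tr_add)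
qed

lemma secant_meets_U_again:
  assumes on_U: "Aff x0 (f (x0 + a) - b) \<in> U" and "a \<noteq> x0 ^ q"
  shows "\<exists>x1. x1 \<noteq> x0 \<and> Aff x1 (f (x1 + a) - b) \<in> U"
proof -
  have on_U_iff: "Aff x (f (x + a) - b) \<in> U \<longleftrightarrow> Tr (f (x + a)) - Tr b = f (Tr x)" for x
    by (simp add: Aff_in_U Tr_diff)
  \<comment> \<open>With \<open>z = x + a\<close> the condition reads \<open>Tr (f z) - Tr b = f (Tr z - Tr a)\<close>. It is solved again by
    the conjugate \<open>z0 ^ q\<close>, unless \<open>z0 ^ q = z0\<close>; then it says \<open>f z0 + f (Tr x0) = - Tr b\<close>, which is
    symmetric in \<open>z0\<close> and \<open>Tr x0\<close>.\<close>
  define z0 where "z0 = x0 + a"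
  have eq0: "Tr (f z0) - Tr b = f (Tr x0)" using on_U by (simp add: on_U_iff z0_def)
  show ?thesis
  proof (cases "z0 ^ q = z0")
    case False
    define x1 where "x1 = z0 ^ q - a"
    have "Tr x1 = Tr x0" by (simp add: x1_def z0_def Tr_diff Tr_add)
    moreover have "Tr (f (x1 + a)) = Tr (f z0)" by (simp add: x1_def f_power_q)
    ultimately have "Aff x1 (f (x1 + a) - b) \<in> U" using eq0 by (simp add: on_U_iff)
    moreover have "x1 \<noteq> x0" using False by (auto simp: x1_def z0_def diff_eq_eq)
    ultimately show ?thesis by blast
  next
    case True
    define s where "s = Tr x0"
    define x1 where "x1 = s - a"
    have fixed: "s ^ q = s" "f s ^ q = f s" "f z0 ^ q = f z0"
      using True by (simp_all add: s_def flip: f_power_q)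
    have "Tr x1 = - Tr z0" by (simp add: x1_def s_def z0_def Tr_diff Tr_add Tr_fixed)
    then have Tr_x1: "Tr x1 = z0" using Tr_fixed[OF True] by simp
    have "Tr b = - f z0 - f s" using eq0 by (simp add: Tr_fixed fixed s_def algebra_simps)
    moreover have "x1 + a = s" by (simp add: x1_def)
    ultimately have "Tr (f (x1 + a)) - Tr b = f (Tr x1)" by (simp add: Tr_x1 Tr_fixed fixed)
    moreover have "x1 \<noteq> x0" using \<open>a \<noteq> x0 ^ q\<close> by (auto simp: x1_def s_def Tr_def)
    ultimately show ?thesis using on_U_iff by blast
  qed
qed

lemma tangent_at_U_eq_polar:
  assumes "tangent_at f U l Q"
  shows "l = polar Q"
proof -
  have Q: "Q \<in> U" "Q \<in> line_pts f l"
    and uniq: "\<And>R. R \<in> line_pts f l \<Longrightarrow> R \<in> U \<Longrightarrow> R = Q"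
    using assms by (auto simp: tangent_at_def)
  have not_N: "l \<noteq> N a" for a
  proof
    assume "l = N a"
    moreover obtain y y' where "y \<noteq> y'" "Aff a y \<in> U" "Aff a y' \<in> U"
      using vertical_line_meets_U_twice by blast
    ultimately show False using uniq[of "Aff a y"] uniq[of "Aff a y'"] by auto
  qed
  show ?thesis
  proof (cases Q)
    case (Inf c)
    then have "c = None" using Q(1) by (simp add: Inf_in_U)
    with Q(2) Inf not_N show ?thesis by (cases l) auto
  next
    case (Aff x0 y0)
    with Q(2) not_N obtain a b where l: "l = L a b" and y0: "y0 = f (x0 + a) - b"
      by (cases l) auto
    have a: "a = x0 ^ q"
    proof (rule ccontr)
      assume "a \<noteq> x0 ^ q"
      then obtain x1 where "x1 \<noteq> x0" "Aff x1 (f (x1 + a) - b) \<in> U"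
        using secant_meets_U_again Q(1) Aff y0 by blast
      with uniq l Aff show False by auto
    qed
    then have "b = y0 ^ q" using Q(1) Aff y0 by (simp add: Aff_in_U Tr_def)
    with l a Aff show ?thesis by simp
  qed
qed

lemma tangent_points_on_polar:
  assumes "tangent_at f U l Q" "P \<in> line_pts f l"
  shows "Q \<in> line_pts f (polar P)"
  using assms polar_symmetric tangent_at_U_eq_polar by blast

lemma collineation_image_U_tangent_points_collinear:
  assumes "collineation f g" "g ` U = B"
  shows "\<exists>m. \<forall>l Q. g P \<in> line_pts f l \<longrightarrow> tangent_at f B l Q \<longrightarrow> Q \<in> line_pts f m"
proof -
  obtain m where m: "g ` line_pts f (polar P) = line_pts f m"
    using assms(1) unfolding collineation_def by blast
  have "bij g" using assms(1) by (simp add: collineation_def)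
  have "Q \<in> line_pts f m" if through_P: "g P \<in> line_pts f l" and tangent: "tangent_at f B l Q"
    for l Q
  proof -
    obtain l0 where l0: "g ` line_pts f l0 = line_pts f l" "tangent_at f U l0 (inv_into UNIV g Q)"
      using collineation_tangent_at_preimage[OF assms tangent] by blast
    have "P \<in> line_pts f l0"
      using through_P l0(1) \<open>bij g\<close> by (metis bij_def inj_image_mem_iff)
    then have "inv_into UNIV g Q \<in> line_pts f (polar P)"
      using tangent_points_on_polar l0(2) by blast
    then show ?thesis using m \<open>bij g\<close> by (metis bij_def image_eqI surj_f_inv_f)
  qed
  then show ?thesis by blast
qed

lemma four_points_not_collinear:
  assumes "a \<noteq> 0" "f a \<noteq> f b"
  shows "\<not> (\<exists>m. \<forall>x \<in> {a, - a, b, - b}. Aff x (r - f x) \<in> line_pts f m)"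
proof
  assume "\<exists>m. \<forall>x \<in> {a, - a, b, - b}. Aff x (r - f x) \<in> line_pts f m"
  then obtain m where on_m: "\<And>x. x \<in> {a, - a, b, - b} \<Longrightarrow> Aff x (r - f x) \<in> line_pts f m"
    by blast
  show False
  proof (cases m)
    case (L \<alpha> \<beta>)
    then have on_L: "r - f x = f (x + \<alpha>) - \<beta>" if "x \<in> {a, - a, b, - b}" for x
      using on_m[OF that] by simp
    have "f (a + \<alpha>) = f (- a + \<alpha>)" using on_L[of a] on_L[of "- a"] by simp
    then have "a + \<alpha> = - a + \<alpha> \<or> a + \<alpha> = a - \<alpha>" using f_eq_f_imp by fastforce
    then have "2 * a = 0 \<or> 2 * \<alpha> = 0" by (auto simp: algebra_simps)
    then have "\<alpha> = 0" using assms(1) by simp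
    then have "2 * f a = 2 * f b" using on_L[of a] on_L[of b] by (simp add: algebra_simps)
    then show False using assms(2) by simp
  next
    case (N c)
    then have "2 * a = 0" using on_m[of a] on_m[of "- a"] by simp
    then show False using assms(1) by simp
  next
    case Linf
    then show False using on_m[of a] by auto
  qed
qed

end

locale cm_field_theta = cm_field n k f for n k :: nat and f :: "'a::{field,finite} \<Rightarrow> 'a" +
  fixes \<theta> :: 'a
  assumes theta_nonzero: "\<theta> \<noteq> 0"
    and theta_nonsquare: "\<nexists>s. s ^ q = s \<and> s ^ 2 = \<theta> ^ (q + 1)"
begin

lemma square_in_Fq_theta_eq_0:
  assumes "w ^ 2 = t * \<theta>" "t ^ q = t"
  shows "w = 0"
proof (rule ccontr)
  assume "w \<noteq> 0"
  then have "t \<noteq> 0" using assms(1) by auto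
  define s where "s = w ^ (q + 1) / t"
  have "s ^ 2 = (w ^ 2) ^ (q + 1) / t ^ 2"
    unfolding s_def power_divide power_mult[symmetric] by (simp only: mult.commute)
  also have "\<dots> = t ^ q * t * \<theta> ^ (q + 1) / t ^ 2"
    using assms(1) by (simp add: power_mult_distrib)
  also have "\<dots> = \<theta> ^ (q + 1)"
    using assms(2) \<open>t \<noteq> 0\<close> by (simp add: power2_eq_square)
  finally have "s ^ 2 = \<theta> ^ (q + 1)" .
  moreover have "s ^ q = (w ^ q) ^ q * w ^ q / t ^ q"
    by (simp add: s_def power_divide power_mult_distrib mult.commute flip: power_mult)
  then have "s ^ q = s" using assms(2) by (simp add: s_def power_add mult.commute)
  ultimately show False using theta_nonsquare by blast
qed

lemma f_in_Fq_theta_eq_0: "f z = t * \<theta> \<Longrightarrow> t ^ q = t \<Longrightarrow> z = 0"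
  using square_in_Fq_theta_eq_0 f_eq_square by (metis f_eq_0_iff power_eq_0_iff zero_power2)

lemma tangent_at_Utheta:
  assumes "f x - r = t * \<theta>" "t ^ q = t"
  shows "tangent_at f (unital_Utheta n \<theta>) (L (- x) (f x - r)) (Aff x (r - f x))"
proof -
  have on_Utheta: "Aff x (r - f x) \<in> unital_Utheta n \<theta>"
    using assms by (auto simp: Aff_in_Utheta power_q_minus algebra_simps intro!: exI[of _ "- t"])
  have unique: "y = x" if on_both: "Aff y (f (y - x) - (f x - r)) \<in> unital_Utheta n \<theta>" for y
  proof -
    obtain t' where "t' ^ q = t'" "f (y - x) - (f x - r) = t' * \<theta>"
      using on_both unfolding Aff_in_Utheta by blast
    then have "f (y - x) = (t' + t) * \<theta>" "(t' + t) ^ q = t' + t"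
      using assms by (simp_all add: algebra_simps power_q_add)
    then show "y = x" using f_in_Fq_theta_eq_0 by fastforce
  qed
  have "line_pts f (L (- x) (f x - r)) \<inter> unital_Utheta n \<theta> = {Aff x (r - f x)}"
  proof
    show "line_pts f (L (- x) (f x - r)) \<inter> unital_Utheta n \<theta> \<subseteq> {Aff x (r - f x)}"
    proof
      fix R assume R: "R \<in> line_pts f (L (- x) (f x - r)) \<inter> unital_Utheta n \<theta>"
      then obtain y where y: "R = Aff y (f (y - x) - (f x - r))"
        by (auto simp: unital_Utheta_def)
      with R have "y = x" using unique by blast
      with y show "R \<in> {Aff x (r - f x)}" by simp
    qed
    show "{Aff x (r - f x)} \<subseteq> line_pts f (L (- x) (f x - r)) \<inter> unital_Utheta n \<theta>"
      using on_Utheta by auto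
  qed
  then show ?thesis by (simp add: tangent_at_def)
qed

lemma no_collineation_U_to_Utheta: "\<nexists>g. collineation f g \<and> g ` U = unital_Utheta n \<theta>"
proof
  assume "\<exists>g. collineation f g \<and> g ` U = unital_Utheta n \<theta>"
  then obtain g where g: "collineation f g" "g ` U = unital_Utheta n \<theta>" by blast
  define r where "r = (\<theta> - 1) ^ 2"
  obtain a where a: "f a = (\<theta> - 1) ^ 2" using f_surj_squares by blast
  obtain b where b: "f b = (\<theta> + 1) ^ 2" using f_surj_squares by blast
  have "\<theta> \<noteq> 1" using theta_nonsquare by (metis power_one)
  then have "a \<noteq> 0" using a by auto
  have "(\<theta> + 1) ^ 2 - (\<theta> - 1) ^ 2 = \<theta>"
    by (simp add: power2_eq_square algebra_simps four_eq_1)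
  then have fb: "f b - r = 1 * \<theta>" by (simp add: b r_def)
  then have "f a \<noteq> f b" using a theta_nonzero by (auto simp: r_def)
  have "\<exists>t. t ^ q = t \<and> f x - r = t * \<theta>" if "x \<in> {a, - a, b, - b}" for x
  proof -
    have "f x - r = 0 * \<theta> \<or> f x - r = 1 * \<theta>" using that a fb by (auto simp: r_def)
    moreover have "(0::'a) ^ q = 0" "(1::'a) ^ q = 1" by simp_all
    ultimately show ?thesis by blast
  qed
  then have tangent: "tangent_at f (unital_Utheta n \<theta>) (L (- x) (f x - r)) (Aff x (r - f x))"
    if "x \<in> {a, - a, b, - b}" for x
    using that tangent_at_Utheta by blast
  define P where "P = inv_into UNIV g (Aff 0 r)"
  have "g P = Aff 0 r" using g(1) by (simp add: P_def collineation_def bij_def surj_f_inv_f)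
  then obtain m where m: "\<forall>l Q. Aff 0 r \<in> line_pts f l \<longrightarrow>
      tangent_at f (unital_Utheta n \<theta>) l Q \<longrightarrow> Q \<in> line_pts f m"
    using collineation_image_U_tangent_points_collinear[OF g] by metis
  have "Aff 0 r \<in> line_pts f (L (- x) (f x - r))" for x by simp
  then have "\<forall>x \<in> {a, - a, b, - b}. Aff x (r - f x) \<in> line_pts f m"
    using m tangent by blast
  then show False using four_points_not_collinear \<open>a \<noteq> 0\<close> \<open>f a \<noteq> f b\<close> by blast
qed

end

theorem theorem4p6:
  fixes n k :: nat and \<theta> :: "'a::{field,finite}"
  assumes "n > 0"
    and "card (UNIV :: 'a set) = 3 ^ (2 * n)"
    and "gcd k (2 * n) = 1"
    and "\<theta> \<noteq> 0"
    and "\<not> (\<exists>s::'a. s ^ (3 ^ n) = s \<and> s ^ 2 = \<theta> ^ (3 ^ n + 1))"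
  shows "card {g \<in> shift_group. g ` unital_U n k = (unital_U n k :: 'a pt set)} = 3 ^ (2 * n) \<and>
     card {g \<in> shift_group. g ` unital_Utheta n \<theta> = unital_Utheta n \<theta>} = 3 ^ (3 * n) \<and>
     \<not> (\<exists>g. collineation (cm_fun k) g \<and> g ` unital_U n k = unital_Utheta n \<theta>)"
proof -
  interpret cm_field_theta n k "cm_fun k" \<theta>
    by unfold_locales (use assms in simp_all)
  show ?thesis
    using card_shift_stabilizer_U card_shift_stabilizer_Utheta[OF theta_nonzero]
      no_collineation_U_to_Utheta by simp
qed

end
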